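(* For every even $n$ and integers $1\le k\le\frac n2$, $1\le i\le\frac n2$, $$\sum_{j=0}^{k}\binom{(n-2i)/2}{j}_{q^2}q^{2(k-j)^2-(k-j)+(n-1)j-1}\frac{(q^{n+2-4k+2j};q^2)_{2k-2j}}{(q;q)_{2k-2j}} =q^{2k^2-k-1}\sum_{r=0}^{2k}\binom{n-2i}{r}_q\,q^{(2k-r)(n-2i-r)}\frac{\prod_{j=i+r+1-2k}^{i}(1-q^{2j})}{\prod_{j=1}^{2k-r}(1-q^j)}$$ as an identity of rational functions in $q$.
   Context: $(x;t)_m=\prod_{j=0}^{m-1}(1-xt^j)$ and $\binom{c}{d}_t=\prod_{j=0}^{d-1}\frac{1-t^{c-j}}{1-t^{j+1}}$ (equal to $0$ if $d>c\ge0$). Products over empty ranges equal $1$. *)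

theory Defs
  imports Complex_Main
begin

definition qpoch :: "'a::field \<Rightarrow> 'a \<Rightarrow> nat \<Rightarrow> 'a" where
  "qpoch x t m = (\<Prod>j<m. 1 - x * t ^ j)"

definition qbinom :: "nat \<Rightarrow> nat \<Rightarrow> 'a::field \<Rightarrow> 'a" where
  "qbinom c d t = (if d > c then 0 else (\<Prod>j<d. (1 - t ^ (c - j)) / (1 - t ^ (j + 1))))"

end

theory Submission
  imports Defs
begin

text \<open>Write \<open>n = 2m + 2i\<close> and \<open>K = 2k\<close>. Every quotient in the statement is a value of
  \<open>binom_negqpoch a t q = [a t]_(q^2) (-q;q)_t\<close>, so after removing \<open>q^(2k^2-k-1)\<close> the two
  sides become \<open>lhs_sum i m K q\<close> and \<open>rhs_sum i m K q\<close>. Both sums satisfy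
  \<open>F(a,m+1,K) = F(a+1,m,K) + q^(2(2m+a+2-K)) F(a,m,K-2)\<close> and equal \<open>[a K]_(q^2) (-q;q)_K\<close> for
  \<open>m = 0\<close>, hence agree. For the left sum the recurrence is the Pascal rule for \<open>[m+1,j]_(q^2)\<close>.
  For the right sum one expands \<open>[2m+2,K-t]_q\<close> by two Pascal steps and rewrites with the Pascal
  rule and the ratio of consecutive values of \<open>binom_negqpoch\<close>; the remaining terms telescope in \<open>t\<close>.
  Gaussian binomials are the polynomials given by the Pascal recursion; they agree with
  \<open>qbinom\<close> since no \<open>q^l\<close> with \<open>1 \<le> l \<le> n\<close> equals 1.\<close>

lemma power_int_split:
  "(q::'a::field) \<noteq> 0 \<Longrightarrow> x = y1 + y2 \<Longrightarrow> q powi x = q powi y1 * q powi y2"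
  by (simp add: power_int_add)

lemma power_int_mult_eq:
  "(q::'a::field) \<noteq> 0 \<Longrightarrow> x1 + x2 = y1 + y2 \<Longrightarrow> q powi x1 * q powi x2 = q powi y1 * q powi y2"
  by (metis power_int_add)

lemma sum_int_shift:
  fixes f :: "int \<Rightarrow> 'a::ab_group_add"
  assumes "f 0 = 0" and "f (K + 1) = 0"
  shows "(\<Sum>t\<in>{0..K}. f (t + 1)) = (\<Sum>t\<in>{0..K}. f t)"
proof -
  have "(\<Sum>t\<in>{0..L}. f (t + 1) - f t) = f (L + 1) - f 0" if "-1 \<le> L" for L
    using that
  proof (induction L rule: int_ge_induct)
    case (step L)
    then have "{0..L + 1} = insert (L + 1) {0..L}"
      using atLeastAtMostPlus1_int_conv[of 0 L] by (simp add: add.commute)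
    with step show ?case by simp
  qed simp
  from this[of K] show ?thesis
    using assms by (cases "K < -1") (simp_all add: sum_subtractf)
qed

fun gauss_binom :: "nat \<Rightarrow> nat \<Rightarrow> 'a::comm_ring_1 \<Rightarrow> 'a" where
  "gauss_binom N 0 t = 1"
| "gauss_binom 0 (Suc r) t = 0"
| "gauss_binom (Suc N) (Suc r) t = gauss_binom N r t + t ^ Suc r * gauss_binom N (Suc r) t"

lemma gauss_binom_eq_0: "N < r \<Longrightarrow> gauss_binom N r t = 0"
  by (induction N r t rule: gauss_binom.induct) auto

lemma gauss_binom_Suc_Suc':
  "gauss_binom (Suc N) (Suc r) t = t ^ (N - r) * gauss_binom N r t + gauss_binom N (Suc r) t"
proof (induction N arbitrary: r)
  case 0
  then show ?case by (cases r) auto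
next
  case (Suc N)
  show ?case
  proof (cases r)
    case 0
    then show ?thesis using Suc.IH[of 0] by (simp add: algebra_simps)
  next
    case (Suc s)
    have lhs: "gauss_binom (Suc (Suc N)) (Suc r) t
        = (t ^ (N - s) * gauss_binom N s t + gauss_binom N (Suc s) t)
          + t ^ Suc (Suc s) * (t ^ (N - Suc s) * gauss_binom N (Suc s) t + gauss_binom N (Suc (Suc s)) t)"
      using Suc.IH[of s] Suc.IH[of "Suc s"] \<open>r = Suc s\<close> by (simp only: gauss_binom.simps)
    have rhs: "t ^ (Suc N - r) * gauss_binom (Suc N) r t + gauss_binom (Suc N) (Suc r) t
        = t ^ (N - s) * (gauss_binom N s t + t ^ Suc s * gauss_binom N (Suc s) t)
          + (gauss_binom N (Suc s) t + t ^ Suc (Suc s) * gauss_binom N (Suc (Suc s)) t)"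
      using \<open>r = Suc s\<close> by simp
    show ?thesis
    proof (cases "s < N")
      case True
      then obtain d where "N = Suc s + d" by (metis less_imp_Suc_add add_Suc)
      then show ?thesis unfolding lhs rhs by (simp add: algebra_simps power_add)
    next
      case False
      then show ?thesis unfolding lhs rhs by (simp add: gauss_binom_eq_0)
    qed
  qed
qed

lemma gauss_binom_ratio:
  "(1 - t ^ Suc r) * gauss_binom N (Suc r) t = (1 - t ^ (N - r)) * gauss_binom N r t"
  using gauss_binom.simps(3)[of N r t] gauss_binom_Suc_Suc'[of N r t]
  by (simp add: algebra_simps)

definition qfact :: "'a::comm_ring_1 \<Rightarrow> nat \<Rightarrow> 'a" where
  "qfact t N = (\<Prod>l=1..N. 1 - t ^ l)"

lemma qfact_0 [simp]: "qfact t 0 = 1"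
  by (simp add: qfact_def)

lemma qfact_Suc: "qfact t (Suc N) = qfact t N * (1 - t ^ Suc N)"
  by (simp add: qfact_def)

lemma qfact_add: "qfact t (N + r) = qfact t N * (\<Prod>l<r. 1 - t ^ (N + 1 + l))"
  by (induction r) (simp_all add: qfact_Suc)

lemma qfact_nonzero: "(\<forall>l\<in>{1..N}. (t::'a::field) ^ l \<noteq> 1) \<Longrightarrow> qfact t N \<noteq> 0"
  by (auto simp: qfact_def)

lemma gauss_binom_qfact:
  "r \<le> N \<Longrightarrow> gauss_binom N r t * qfact t r * qfact t (N - r) = qfact t N"
proof (induction r)
  case 0
  then show ?case by simp
next
  case (Suc r)
  then have split: "qfact t (N - r) = qfact t (N - Suc r) * (1 - t ^ (N - r))"
    by (metis Suc_diff_Suc Suc_le_lessD qfact_Suc)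
  have "gauss_binom N (Suc r) t * qfact t (Suc r) * qfact t (N - Suc r)
      = ((1 - t ^ Suc r) * gauss_binom N (Suc r) t) * qfact t r * qfact t (N - Suc r)"
    by (simp add: qfact_Suc ac_simps)
  also have "\<dots> = gauss_binom N r t * qfact t r * qfact t (N - r)"
    unfolding gauss_binom_ratio split by (simp add: ac_simps)
  finally show ?case using Suc by simp
qed

definition gauss_binom_int :: "nat \<Rightarrow> int \<Rightarrow> 'a::comm_ring_1 \<Rightarrow> 'a" where
  "gauss_binom_int N r t = (if r < 0 then 0 else gauss_binom N (nat r) t)"

lemma gauss_binom_int_neg [simp]: "r < 0 \<Longrightarrow> gauss_binom_int N r t = 0"
  by (simp add: gauss_binom_int_def)

lemma gauss_binom_int_gt: "int N < r \<Longrightarrow> gauss_binom_int N r t = 0"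
  by (simp add: gauss_binom_int_def gauss_binom_eq_0)

lemma gauss_binom_int_0 [simp]: "gauss_binom_int N 0 t = 1"
  by (simp add: gauss_binom_int_def)

lemma gauss_binom_int_of_nat [simp]: "gauss_binom_int N (int r) t = gauss_binom N r t"
  by (simp add: gauss_binom_int_def)

lemma gauss_binom_int_0_left: "gauss_binom_int 0 r t = (if r = 0 then 1 else 0)"
  by (cases "r < 0") (auto simp: gauss_binom_int_def gauss_binom_eq_0)

lemma gauss_binom_int_Suc:
  "gauss_binom_int (Suc N) r (t::'a::field)
     = gauss_binom_int N (r - 1) t + t powi r * gauss_binom_int N r t"
proof (cases "r < 1")
  case True
  then consider "r < 0" | "r = 0" by linarith
  then show ?thesis by cases simp_all
next
  case False
  define s where "s = nat (r - 1)"
  have r1: "r - 1 = int s" and pow: "t powi r = t ^ Suc s"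
    using False by (simp_all add: s_def power_int_def nat_diff_distrib')
  have "\<And>M. gauss_binom_int M r t = gauss_binom M (Suc s) t"
    using False by (simp add: gauss_binom_int_def s_def nat_diff_distrib')
  then show ?thesis unfolding r1 pow by simp
qed

lemma gauss_binom_int_Suc':
  "gauss_binom_int (Suc N) r (t::'a::field)
     = t powi (int N + 1 - r) * gauss_binom_int N (r - 1) t + gauss_binom_int N r t"
proof (cases "r < 1")
  case True
  then consider "r < 0" | "r = 0" by linarith
  then show ?thesis by cases simp_all
next
  case False
  define s where "s = nat (r - 1)"
  have r1: "r - 1 = int s"
    using False by (simp add: s_def)
  have b: "\<And>M. gauss_binom_int M r t = gauss_binom M (Suc s) t"
    using False by (simp add: gauss_binom_int_def s_def nat_diff_distrib')
  show ?thesis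
  proof (cases "s \<le> N")
    case True
    then have "int N + 1 - r = int (N - s)" using r1 by simp
    then show ?thesis unfolding b r1 using gauss_binom_Suc_Suc'[of N s t] by simp
  next
    case False
    then show ?thesis unfolding b r1 by (simp add: gauss_binom_eq_0)
  qed
qed

lemma gauss_binom_int_Suc_Suc:
  assumes "(q::'a::field) \<noteq> 0"
  shows "gauss_binom_int (Suc (Suc N)) r q
     = gauss_binom_int N r q
       + (q powi (int N + 1 - r) + q powi (int N + 2 - r)) * gauss_binom_int N (r - 1) q
       + q powi (2 * (int N + 2 - r)) * gauss_binom_int N (r - 2) q"
proof -
  have e0: "int (Suc N) + 1 - r = int N + 2 - r" and e1: "int N + 1 - (r - 1) = int N + 2 - r"
    and e2: "r - 1 - 1 = r - 2"
    by simp_all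
  have "gauss_binom_int (Suc (Suc N)) r q
      = q powi (int N + 2 - r) * gauss_binom_int (Suc N) (r - 1) q + gauss_binom_int (Suc N) r q"
    using gauss_binom_int_Suc'[of "Suc N" r q] unfolding e0 .
  also have "gauss_binom_int (Suc N) (r - 1) q
      = q powi (int N + 2 - r) * gauss_binom_int N (r - 2) q + gauss_binom_int N (r - 1) q"
    using gauss_binom_int_Suc'[of N "r - 1" q] unfolding e1 e2 .
  also have "gauss_binom_int (Suc N) r q
      = q powi (int N + 1 - r) * gauss_binom_int N (r - 1) q + gauss_binom_int N r q"
    by (rule gauss_binom_int_Suc')
  finally have expand: "gauss_binom_int (Suc (Suc N)) r q
      = q powi (int N + 2 - r) * (q powi (int N + 2 - r) * gauss_binom_int N (r - 2) q
          + gauss_binom_int N (r - 1) q)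
        + (q powi (int N + 1 - r) * gauss_binom_int N (r - 1) q + gauss_binom_int N r q)" .
  have "q powi (2 * (int N + 2 - r)) = q powi (int N + 2 - r) * q powi (int N + 2 - r)"
    by (rule power_int_split[OF assms]) simp
  then show ?thesis
    unfolding expand by (simp add: algebra_simps)
qed

definition negqpoch :: "'a::comm_ring_1 \<Rightarrow> int \<Rightarrow> 'a" where
  "negqpoch q t = (\<Prod>l=1..nat t. 1 + q ^ l)"

lemma negqpoch_of_nat: "negqpoch q (int t) = (\<Prod>l=1..t. 1 + q ^ l)"
  by (simp add: negqpoch_def)

lemma negqpoch_step: "1 \<le> t \<Longrightarrow> negqpoch q t = (1 + q powi t) * negqpoch q (t - 1)"
proof -
  assume "1 \<le> t"
  then have "nat t = Suc (nat (t - 1))"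
    by simp
  then show ?thesis
    using \<open>1 \<le> t\<close> by (simp add: negqpoch_def power_int_def)
qed

lemma qfact_square: "qfact (q^2) r = qfact q r * negqpoch q (int r)"
  unfolding qfact_def negqpoch_of_nat prod.distrib[symmetric]
  by (intro prod.cong refl) (simp add: power2_eq_square power_mult_distrib algebra_simps)

text \<open>\<open>binom_negqpoch a t q\<close> is \<open>[a t]_(q^2) (-q;q)_t\<close>, which for \<open>0 \<le> t \<le> a\<close> equals
  \<open>(q^(2(a-t+1));q^2)_t / (q;q)_t\<close>.\<close>
definition binom_negqpoch :: "nat \<Rightarrow> int \<Rightarrow> 'a::field \<Rightarrow> 'a" where
  "binom_negqpoch a t q = gauss_binom_int a t (q^2) * negqpoch q t"

lemma binom_negqpoch_neg [simp]: "t < 0 \<Longrightarrow> binom_negqpoch a t q = 0"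
  by (simp add: binom_negqpoch_def)

lemma binom_negqpoch_0 [simp]: "binom_negqpoch a 0 q = 1"
  by (simp add: binom_negqpoch_def negqpoch_def)

lemma binom_negqpoch_gt: "int a < t \<Longrightarrow> binom_negqpoch a t q = 0"
  by (simp add: binom_negqpoch_def gauss_binom_int_gt)

lemma binom_negqpoch_Suc:
  "binom_negqpoch (Suc a) t q = q powi (2 * t) * binom_negqpoch a t q + (1 + q powi t) * binom_negqpoch a (t - 1) q"
proof (cases "1 \<le> t")
  case True
  have "(q^2) powi t = q powi (2 * t)"
    by (simp add: power_int_mult)
  then show ?thesis using gauss_binom_int_Suc[of a t "q^2"] negqpoch_step[OF True, of q]
    by (simp add: binom_negqpoch_def algebra_simps)
next
  case False
  then consider "t < 0" | "t = 0" by linarith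
  then show ?thesis by cases simp_all
qed

lemma binom_negqpoch_ratio:
  "(1 - q powi (t + 1)) * binom_negqpoch a (t + 1) q = (1 - q powi (2 * (int a - t))) * binom_negqpoch a t q"
proof (cases "0 \<le> t \<and> t < int a")
  case True
  then obtain s where t: "t = int s" "t + 1 = int (Suc s)" and "s < a"
    by (metis nonneg_int_cases of_nat_less_iff of_nat_Suc add.commute)
  then have "2 * (int a - t) = int (2 * (a - s))"
    by simp
  then have exp: "q powi (2 * (int a - t)) = (q^2) ^ (a - s)"
    by (metis power_int_of_nat power_mult)
  have lhs: "(1 - q powi (t + 1)) * binom_negqpoch a (t + 1) q
      = (1 - q ^ Suc s) * (gauss_binom a (Suc s) (q^2) * ((1 + q ^ Suc s) * negqpoch q (int s)))"
    unfolding binom_negqpoch_def t(2) power_int_of_nat gauss_binom_int_of_nat negqpoch_of_nat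
    by simp
  have rhs: "(1 - q powi (2 * (int a - t))) * binom_negqpoch a t q
      = (1 - (q^2) ^ (a - s)) * (gauss_binom a s (q^2) * negqpoch q (int s))"
    unfolding binom_negqpoch_def exp unfolding t(1) gauss_binom_int_of_nat ..
  have "(1 - q ^ Suc s) * (gauss_binom a (Suc s) (q^2) * ((1 + q ^ Suc s) * negqpoch q (int s)))
      = ((1 - (q^2) ^ Suc s) * gauss_binom a (Suc s) (q^2)) * negqpoch q (int s)"
    by (simp only: power2_eq_square power_mult_distrib) (simp add: algebra_simps)
  then show ?thesis
    unfolding lhs rhs gauss_binom_ratio by (simp only: mult.assoc)
next
  case False
  then consider "t < -1" | "t = -1" | "int a < t + 1" by linarith
  then show ?thesis
  proof cases
    case 3
    then have "binom_negqpoch a (t + 1) q = 0"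
      by (rule binom_negqpoch_gt)
    moreover have "t = int a \<or> binom_negqpoch a t q = 0"
      using 3 by (auto intro: binom_negqpoch_gt)
    ultimately show ?thesis by auto
  qed simp_all
qed

definition lhs_sum :: "nat \<Rightarrow> nat \<Rightarrow> int \<Rightarrow> 'a::field \<Rightarrow> 'a" where
  "lhs_sum a m K q = (\<Sum>j\<le>m. gauss_binom m j (q^2) * binom_negqpoch (m + a - j) (K - 2 * int j) q
                              * q powi (2 * int j * (int m + int a + int j - K)))"

definition rhs_sum :: "nat \<Rightarrow> nat \<Rightarrow> int \<Rightarrow> 'a::field \<Rightarrow> 'a" where
  "rhs_sum a m K q = (\<Sum>t\<in>{0..K}. gauss_binom_int (2 * m) (K - t) q
                              * q powi (t * (2 * int m - K + t)) * binom_negqpoch a t q)"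

lemma lhs_sum_0: "lhs_sum a 0 K q = binom_negqpoch a K q"
  by (simp add: lhs_sum_def)

lemma rhs_sum_0: "rhs_sum a 0 K q = binom_negqpoch a K q"
proof -
  have "rhs_sum a 0 K q = (\<Sum>t\<in>{0..K}. if t = K then binom_negqpoch a K q else 0)"
    unfolding rhs_sum_def by (intro sum.cong refl) (auto simp: gauss_binom_int_0_left)
  then show ?thesis
    by (cases "K < 0") auto
qed

lemma lhs_sum_Suc:
  assumes q: "(q::'a::field) \<noteq> 0"
  shows "lhs_sum a (Suc m) K q
    = lhs_sum (Suc a) m K q + q powi (2 * (2 * int m + int a + 2 - K)) * lhs_sum a m (K - 2) q"
proof -
  define w where "w = q powi (2 * (2 * int m + int a + 2 - K))"
  define f where "f j = gauss_binom m j (q^2) * binom_negqpoch (m + Suc a - j) (K - 2 * int j) q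
    * q powi (2 * int j * (int m + int (Suc a) + int j - K))" for j
  define g where "g j = gauss_binom m j (q^2) * binom_negqpoch (m + a - j) (K - 2 - 2 * int j) q
    * q powi (2 * int j * (int m + int a + int j - (K - 2)))" for j
  have pascal: "gauss_binom (Suc m) (Suc j) (q^2) * binom_negqpoch (Suc m + a - Suc j) (K - 2 * int (Suc j)) q
      * q powi (2 * int (Suc j) * (int (Suc m) + int a + int (Suc j) - K)) = f (Suc j) + w * g j"
    if "j \<le> m" for j
  proof -
    have "(q^2) ^ (m - j) = q powi (2 * (int m - int j))"
      using that by (metis of_nat_diff power_int_of_nat power_mult of_nat_mult of_nat_numeral)
    moreover have "q powi (2 * (int m - int j)) * q powi (2 * int (Suc j) * (int (Suc m) + int a + int (Suc j) - K))
        = w * q powi (2 * int j * (int m + int a + int j - (K - 2)))"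
      unfolding w_def by (rule power_int_mult_eq[OF q]) (simp add: algebra_simps)
    moreover have "m + Suc a - Suc j = m + a - j" "Suc m + a - Suc j = m + a - j"
      "K - 2 * int (Suc j) = K - 2 - 2 * int j"
      "int (Suc m) + int a + int (Suc j) - K = int m + int (Suc a) + int (Suc j) - K"
      using that by simp_all
    ultimately show ?thesis
      unfolding gauss_binom_Suc_Suc' f_def g_def by (simp add: algebra_simps)
  qed
  have "lhs_sum a (Suc m) K q = f 0 + (\<Sum>j\<le>m. f (Suc j) + w * g j)"
    unfolding lhs_sum_def sum.atMost_Suc_shift
    by (intro arg_cong2[where f = "(+)"] sum.cong refl pascal) (simp_all add: f_def)
  also have "\<dots> = (\<Sum>j\<le>Suc m. f j) + w * (\<Sum>j\<le>m. g j)"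
    by (simp add: sum.distrib sum_distrib_left sum.atMost_Suc_shift del: sum.atMost_Suc)
  also have "(\<Sum>j\<le>Suc m. f j) = lhs_sum (Suc a) m K q"
    by (simp add: lhs_sum_def f_def gauss_binom_eq_0)
  finally show ?thesis
    by (simp add: lhs_sum_def g_def w_def)
qed

lemma rhs_summand_Suc:
  fixes q :: "'a::field" and K x :: int
  assumes q: "q \<noteq> 0" and x: "x = int N - K"
    and Q: "\<And>t. Q t = gauss_binom_int N (K - t) q * q powi (t * (x + t)) * (1 + q powi t)
                      * binom_negqpoch a (t - 1) q"
    and D: "\<And>t. D t = gauss_binom_int N (K - t - 1) q * q powi ((t + 1) * (x + t + 1)) * (q powi t - 1)
                      * binom_negqpoch a t q"
  shows "gauss_binom_int (Suc (Suc N)) (K - t) q * q powi (t * (x + 2 + t)) * binom_negqpoch a t q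
    = gauss_binom_int N (K - t) q * q powi (t * (x + t)) * binom_negqpoch (Suc a) t q
      + q powi (2 * (x + int a + 2)) * (gauss_binom_int N (K - 2 - t) q * q powi (t * (x + 2 + t))
          * binom_negqpoch a t q)
      + (Q (t + 1) - Q t) + (D t - D (t + 1))"
proof -
  define B where "B r = gauss_binom_int N r q" for r
  define c where "c t = binom_negqpoch a t q" for t
  have "q powi (t * (x + 2 + t)) = q powi (t * (x + t)) * q powi (2 * t)"
    by (rule power_int_split[OF q]) (simp add: algebra_simps)
  then have part1: "B (K - t) * q powi (t * (x + 2 + t)) * c t
      = B (K - t) * q powi (t * (x + t)) * binom_negqpoch (Suc a) t q - Q t"
    by (simp add: Q B_def c_def binom_negqpoch_Suc algebra_simps)
  define E where "E = (t + 1) * (x + t + 1)"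
  have "q powi (int N + 1 - (K - t)) * q powi (t * (x + 2 + t)) = q powi E * q powi t"
    "q powi (int N + 2 - (K - t)) * q powi (t * (x + 2 + t)) = q powi E * q powi (t + 1)"
    by (rule power_int_mult_eq[OF q], simp add: E_def x algebra_simps)+
  then have part2: "(q powi (int N + 1 - (K - t)) + q powi (int N + 2 - (K - t))) * B (K - t - 1)
      * q powi (t * (x + 2 + t)) * c t = Q (t + 1) + D t"
    by (simp add: Q D B_def c_def E_def algebra_simps)
  define F where "F = t * (x + 2 + t) + 2 * (x + 2)"
  have pow3: "q powi (2 * (int N + 2 - (K - t))) * q powi (t * (x + 2 + t)) = q powi F * q powi (2 * t)"
    "q powi (2 * (x + int a + 2)) * q powi (t * (x + 2 + t)) = q powi F * q powi (2 * int a)"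
    by (rule power_int_mult_eq[OF q], simp add: F_def x algebra_simps)+
  have exp1: "q powi ((t + 1 + 1) * (x + (t + 1) + 1)) = q powi F * q powi (2 * t)"
    and exp2: "q powi (2 * int a) = q powi (2 * t) * q powi (2 * (int a - t))"
    by (rule power_int_split[OF q], simp add: F_def algebra_simps)+
  have ratio: "(q powi (t + 1) - 1) * c (t + 1) = - ((1 - q powi (2 * (int a - t))) * c t)"
    using binom_negqpoch_ratio[of q t a] by (simp add: c_def algebra_simps)
  have "D (t + 1) = B (K - t - 2) * q powi ((t + 1 + 1) * (x + (t + 1) + 1)) * ((q powi (t + 1) - 1) * c (t + 1))"
    by (simp add: D B_def c_def algebra_simps)
  also have "\<dots> = B (K - t - 2) * (q powi F * q powi (2 * t)) * (- ((1 - q powi (2 * (int a - t))) * c t))"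
    unfolding exp1 ratio ..
  also have "\<dots> = B (K - t - 2) * c t * (q powi F * q powi (2 * int a) - q powi F * q powi (2 * t))"
    unfolding exp2 by (simp add: algebra_simps)
  finally have part3: "q powi (2 * (int N + 2 - (K - t))) * B (K - t - 2) * q powi (t * (x + 2 + t)) * c t
      = q powi (2 * (x + int a + 2)) * (B (K - 2 - t) * q powi (t * (x + 2 + t)) * c t) - D (t + 1)"
    using pow3 by (simp add: algebra_simps)
  have "gauss_binom_int (Suc (Suc N)) (K - t) q * q powi (t * (x + 2 + t)) * binom_negqpoch a t q
    = (B (K - t) * q powi (t * (x + t)) * binom_negqpoch (Suc a) t q - Q t) + (Q (t + 1) + D t)
      + (q powi (2 * (x + int a + 2)) * (B (K - 2 - t) * q powi (t * (x + 2 + t)) * c t) - D (t + 1))"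
    unfolding part1[symmetric] part2[symmetric] part3[symmetric] gauss_binom_int_Suc_Suc[OF q]
    by (simp add: B_def c_def algebra_simps)
  then show ?thesis
    by (simp add: B_def c_def algebra_simps)
qed

lemma rhs_sum_Suc:
  assumes q: "(q::'a::field) \<noteq> 0"
  shows "rhs_sum a (Suc m) K q
    = rhs_sum (Suc a) m K q + q powi (2 * (2 * int m + int a + 2 - K)) * rhs_sum a m (K - 2) q"
proof -
  define x where "x = 2 * int m - K"
  define R1 where "R1 t = gauss_binom_int (2 * m) (K - t) q * q powi (t * (x + t)) * binom_negqpoch (Suc a) t q" for t
  define R2 where "R2 t = gauss_binom_int (2 * m) (K - 2 - t) q * q powi (t * (x + 2 + t)) * binom_negqpoch a t q" for t
  define Q where "Q t = gauss_binom_int (2 * m) (K - t) q * q powi (t * (x + t)) * (1 + q powi t)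
    * binom_negqpoch a (t - 1) q" for t
  define D where "D t = gauss_binom_int (2 * m) (K - t - 1) q * q powi ((t + 1) * (x + t + 1)) * (q powi t - 1)
    * binom_negqpoch a t q" for t
  have "x = int (2 * m) - K"
    by (simp add: x_def)
  note summand = rhs_summand_Suc[OF q this Q_def D_def]
  have "Q 0 = 0" "Q (K + 1) = 0" "D 0 = 0" "D (K + 1) = 0"
    by (simp_all add: Q_def D_def)
  then have telescope: "(\<Sum>t\<in>{0..K}. Q (t + 1)) = sum Q {0..K}" "(\<Sum>t\<in>{0..K}. D (t + 1)) = sum D {0..K}"
    by (simp_all add: sum_int_shift)
  have Suc_Suc: "2 * Suc m = Suc (Suc (2 * m))" and exp: "\<And>t. 2 * int (Suc m) - K + t = x + 2 + t"
    by (simp_all add: x_def)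
  have "rhs_sum a (Suc m) K q = (\<Sum>t\<in>{0..K}. R1 t + q powi (2 * (x + int a + 2)) * R2 t
      + (Q (t + 1) - Q t) - (D (t + 1) - D t))"
    unfolding rhs_sum_def Suc_Suc exp summand R1_def R2_def by (simp add: algebra_simps)
  also have "\<dots> = rhs_sum (Suc a) m K q + q powi (2 * (x + int a + 2)) * (\<Sum>t\<in>{0..K}. R2 t)"
    unfolding sum.distrib sum_subtractf telescope by (simp add: rhs_sum_def R1_def x_def sum_distrib_left)
  also have "(\<Sum>t\<in>{0..K}. R2 t) = (\<Sum>t\<in>{0..K - 2}. R2 t)"
    by (rule sum.mono_neutral_right) (auto simp: R2_def)
  also have "\<dots> = rhs_sum a m (K - 2) q"
    unfolding rhs_sum_def R2_def x_def by (intro sum.cong refl) (simp add: algebra_simps)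
  finally show ?thesis
    by (simp add: x_def algebra_simps)
qed

lemma lhs_sum_eq_rhs_sum: "(q::'a::field) \<noteq> 0 \<Longrightarrow> lhs_sum a m K q = rhs_sum a m K q"
proof (induction m arbitrary: a K)
  case 0
  then show ?case by (simp add: lhs_sum_0 rhs_sum_0)
next
  case (Suc m)
  then show ?case by (simp add: lhs_sum_Suc rhs_sum_Suc)
qed

lemma qbinom_eq_gauss_binom:
  assumes "\<forall>l\<in>{1..c}. (t::'a::field) ^ l \<noteq> 1"
  shows "qbinom c d t = gauss_binom c d t"
proof (cases "d \<le> c")
  case True
  then obtain e where c: "c = e + d"
    by (metis add.commute le_add_diff_inverse)
  have "(\<Prod>j<d. 1 - t ^ (c - j)) = (\<Prod>l<d. 1 - t ^ (e + 1 + l))"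
    by (subst prod.nat_diff_reindex[symmetric]) (intro prod.cong refl, simp add: c)
  moreover have "(\<Prod>j<d. 1 - t ^ (j + 1)) = qfact t d"
    unfolding qfact_def by (rule prod.reindex_bij_witness[where i = "\<lambda>l. l - 1" and j = "\<lambda>j. j + 1"]) auto
  moreover have "gauss_binom c d t * qfact t d * qfact t e = qfact t e * (\<Prod>l<d. 1 - t ^ (e + 1 + l))"
    using gauss_binom_qfact[of d c t] qfact_add[of t e d] c by simp
  moreover have "qfact t d \<noteq> 0" "qfact t e \<noteq> 0"
    using assms c by (auto intro!: qfact_nonzero)
  ultimately show ?thesis
    using True by (simp add: qbinom_def prod_dividef field_simps)
qed (simp add: qbinom_def gauss_binom_eq_0)

lemma qpoch_self: "qpoch q q r = qfact q r"
  unfolding qpoch_def qfact_def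
  by (rule prod.reindex_bij_witness[where i = "\<lambda>l. l - 1" and j = "\<lambda>j. j + 1"]) auto

lemma binom_negqpoch_eq_quotient:
  assumes "\<forall>l\<in>{1..2 * N}. (q::'a::field) ^ l \<noteq> 1" and "r \<le> N"
  shows "(\<Prod>l<r. 1 - (q^2) ^ (N - r + 1 + l)) / qfact q r = binom_negqpoch N (int r) q"
proof -
  obtain e where e: "N = e + r"
    using \<open>r \<le> N\<close> by (metis add.commute le_add_diff_inverse)
  have "qfact q r \<noteq> 0" "qfact (q^2) e \<noteq> 0"
    using assms e by (auto intro!: qfact_nonzero simp flip: power_mult)
  moreover have "gauss_binom N r (q^2) * (qfact q r * negqpoch q (int r)) * qfact (q^2) e
      = qfact (q^2) e * (\<Prod>l<r. 1 - (q^2) ^ (e + 1 + l))"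
    using gauss_binom_qfact[of r N "q^2"] qfact_add[of "q^2" e r] e qfact_square[of q r] by simp
  ultimately show ?thesis
    using e by (simp add: binom_negqpoch_def field_simps)
qed

lemma qpoch_quotient_eq_binom_negqpoch:
  assumes q: "(q::'a::field) \<noteq> 0" and "\<forall>l\<in>{1..2 * N}. q ^ l \<noteq> 1"
  shows "qpoch (q powi (2 * (int N - int r + 1))) (q^2) r / qpoch q q r = binom_negqpoch N (int r) q"
proof (cases "r \<le> N")
  case True
  then have "2 * (int N - int r + 1) = int (2 * (N - r + 1))"
    by simp
  then have "q powi (2 * (int N - int r + 1)) = (q^2) ^ (N - r + 1)"
    by (metis power_int_of_nat power_mult)
  then have "qpoch (q powi (2 * (int N - int r + 1))) (q^2) r = (\<Prod>l<r. 1 - (q^2) ^ (N - r + 1 + l))"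
    by (simp add: qpoch_def power_add mult.assoc)
  then show ?thesis
    using binom_negqpoch_eq_quotient[OF assms(2) True] by (simp add: qpoch_self)
next
  case False
  text \<open>The factor with index \<open>r - N - 1\<close> of the numerator is \<open>1 - q^0\<close>.\<close>
  have "2 * (int r - int N - 1) = int (2 * (r - N - 1))"
    using False by simp
  then have "q powi (2 * (int N - int r + 1)) * (q^2) ^ (r - N - 1)
      = q powi (2 * (int N - int r + 1)) * q powi (2 * (int r - int N - 1))"
    by (metis power_int_of_nat power_mult)
  also have "\<dots> = 1"
    using power_int_split[OF q, of 0 "2 * (int N - int r + 1)" "2 * (int r - int N - 1)"] by simp
  finally have "qpoch (q powi (2 * (int N - int r + 1))) (q^2) r = 0"
    unfolding qpoch_def using False by (intro prod_zero) (auto intro!: bexI[where x = "r - N - 1"])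
  moreover have "binom_negqpoch N (int r) q = 0"
    using False by (intro binom_negqpoch_gt) simp
  ultimately show ?thesis by simp
qed

lemma prod_quotient_eq_binom_negqpoch:
  assumes "\<forall>l\<in>{1..2 * a}. (q::'a::field) ^ l \<noteq> 1"
  shows "(\<Prod>j\<in>{int a + 1 - int t..int a}. 1 - q powi (2 * j)) / (\<Prod>j=1..t. 1 - q ^ j)
    = binom_negqpoch a (int t) q"
proof (cases "t \<le> a")
  case True
  have "(\<Prod>l<t. 1 - (q^2) ^ (a - t + 1 + l)) = (\<Prod>j\<in>{int a + 1 - int t..int a}. 1 - q powi (2 * j))"
  proof (rule prod.reindex_bij_witness[where j = "\<lambda>l. int (a - t + 1 + l)" and i = "\<lambda>j. nat (j - (int a + 1 - int t))"])
    fix l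
    show "1 - q powi (2 * int (a - t + 1 + l)) = 1 - (q^2) ^ (a - t + 1 + l)"
      by (metis power_int_of_nat power_mult of_nat_mult of_nat_numeral)
  qed (use True in auto)
  then show ?thesis
    using binom_negqpoch_eq_quotient[OF assms True] by (simp add: qfact_def)
next
  case False
  then have "(\<Prod>j\<in>{int a + 1 - int t..int a}. 1 - q powi (2 * j)) = 0"
    by (intro prod_zero) (auto intro!: bexI[where x = 0])
  moreover have "binom_negqpoch a (int t) q = 0"
    using False by (intro binom_negqpoch_gt) simp
  ultimately show ?thesis by simp
qed

lemma lhs_eq_lhs_sum:
  fixes q :: "'a::field"
  assumes n: "n = 2 * m + 2 * i" and q: "q \<noteq> 0" and roots: "\<forall>l\<in>{1..n}. q ^ l \<noteq> 1"
  shows "(\<Sum>j=0..k. qbinom ((n - 2*i) div 2) j (q^2)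
            * q powi (2 * (int k - int j)^2 - (int k - int j) + (int n - 1) * int j - 1)
            * qpoch (q powi (int n + 2 - 4 * int k + 2 * int j)) (q^2) (2*k - 2*j)
            / qpoch q q (2*k - 2*j))
       = q powi (2 * (int k)^2 - int k - 1) * lhs_sum i m (2 * int k) q"
proof -
  define c where "c = q powi (2 * (int k)^2 - int k - 1)"
  define \<tau> where "\<tau> j = c * (gauss_binom m j (q^2) * binom_negqpoch (m + i - j) (2 * int k - 2 * int j) q
    * q powi (2 * int j * (int m + int i + int j - 2 * int k)))" for j
  have summand: "qbinom ((n - 2*i) div 2) j (q^2)
            * q powi (2 * (int k - int j)^2 - (int k - int j) + (int n - 1) * int j - 1)
            * qpoch (q powi (int n + 2 - 4 * int k + 2 * int j)) (q^2) (2*k - 2*j)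
            / qpoch q q (2*k - 2*j) = \<tau> j" if "j \<le> k" for j
  proof -
    have qbinom: "qbinom ((n - 2*i) div 2) j (q^2) = gauss_binom m j (q^2)"
      using roots n by (simp add: qbinom_eq_gauss_binom flip: power_mult)
    show ?thesis
    proof (cases "j \<le> m")
      case True
      have exp: "int n + 2 - 4 * int k + 2 * int j = 2 * (int (m + i - j) - int (2*k - 2*j) + 1)"
        and len: "int (2*k - 2*j) = 2 * int k - 2 * int j"
        using n that True by simp_all
      have "\<forall>l\<in>{1..2 * (m + i - j)}. q ^ l \<noteq> 1"
        using roots n by auto
      then have "qpoch (q powi (int n + 2 - 4 * int k + 2 * int j)) (q^2) (2*k - 2*j) / qpoch q q (2*k - 2*j)
          = binom_negqpoch (m + i - j) (2 * int k - 2 * int j) q"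
        unfolding exp len[symmetric] by (rule qpoch_quotient_eq_binom_negqpoch[OF q])
      moreover have "q powi (2 * (int k - int j)^2 - (int k - int j) + (int n - 1) * int j - 1)
          = c * q powi (2 * int j * (int m + int i + int j - 2 * int k))"
        unfolding c_def by (rule power_int_split[OF q]) (simp add: n power2_eq_square algebra_simps)
      ultimately show ?thesis
        unfolding \<tau>_def qbinom by (simp add: ac_simps times_divide_eq_right[symmetric])
    qed (simp add: \<tau>_def qbinom gauss_binom_eq_0)
  qed
  have "(\<Sum>j=0..k. \<tau> j) = (\<Sum>j\<le>m. \<tau> j)"
  proof -
    have "(\<Sum>j=0..k. \<tau> j) = (\<Sum>j\<le>max k m. \<tau> j)"
      by (rule sum.mono_neutral_left) (auto simp: \<tau>_def)
    also have "\<dots> = (\<Sum>j\<le>m. \<tau> j)"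
      by (rule sum.mono_neutral_right) (auto simp: \<tau>_def gauss_binom_eq_0)
    finally show ?thesis .
  qed
  then show ?thesis
    using summand by (simp add: lhs_sum_def \<tau>_def c_def sum_distrib_left)
qed

lemma rhs_eq_rhs_sum:
  fixes q :: "'a::field"
  assumes n: "n = 2 * m + 2 * i" and roots: "\<forall>l\<in>{1..n}. q ^ l \<noteq> 1"
  shows "(\<Sum>r=0..2*k. qbinom (n - 2*i) r q
            * q powi ((2 * int k - int r) * (int n - 2 * int i - int r))
            * (\<Prod>j\<in>{int i + int r + 1 - 2 * int k .. int i}. 1 - q powi (2 * j))
            / (\<Prod>j=1..2*k - r. 1 - q ^ j))
       = rhs_sum i m (2 * int k) q"
proof -
  have summand: "qbinom (n - 2*i) r q
            * q powi ((2 * int k - int r) * (int n - 2 * int i - int r))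
            * (\<Prod>j\<in>{int i + int r + 1 - 2 * int k .. int i}. 1 - q powi (2 * j))
            / (\<Prod>j=1..2*k - r. 1 - q ^ j)
      = gauss_binom_int (2 * m) (2 * int k - (2 * int k - int r)) q
        * q powi ((2 * int k - int r) * (2 * int m - 2 * int k + (2 * int k - int r)))
        * binom_negqpoch i (2 * int k - int r) q"
    if "r \<le> 2 * k" for r
  proof -
    have qbinom: "qbinom (n - 2*i) r q = gauss_binom_int (2 * m) (2 * int k - (2 * int k - int r)) q"
      using roots n by (simp add: qbinom_eq_gauss_binom)
    have range: "int i + int r + 1 - 2 * int k = int i + 1 - int (2*k - r)"
      and len: "int (2*k - r) = 2 * int k - int r"
      and exp: "(2 * int k - int r) * (int n - 2 * int i - int r)
        = (2 * int k - int r) * (2 * int m - 2 * int k + (2 * int k - int r))"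
      using that n by simp_all
    have "\<forall>l\<in>{1..2 * i}. q ^ l \<noteq> 1"
      using roots n by auto
    from prod_quotient_eq_binom_negqpoch[OF this, of "2*k - r"]
    show ?thesis
      unfolding times_divide_eq_right[symmetric] qbinom range exp len by (simp only:)
  qed
  have "(\<Sum>t\<in>{0..2 * int k}. f t) = (\<Sum>r=0..2*k. f (2 * int k - int r))" for f :: "int \<Rightarrow> 'a"
    by (rule sum.reindex_bij_witness[where j = "\<lambda>t. nat (2 * int k - t)" and i = "\<lambda>r. 2 * int k - int r"]) auto
  then show ?thesis
    using summand by (simp add: rhs_sum_def)
qed

theorem mainTheorem11:
  fixes q :: "'a::field" and n k i :: nat
  assumes "even n" and "1 \<le> k" and "k \<le> n div 2" and "1 \<le> i" and "i \<le> n div 2"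
    and "q \<noteq> 0" and "\<forall>m\<in>{1..n}. q ^ m \<noteq> 1"
  shows "(\<Sum>j=0..k. qbinom ((n - 2*i) div 2) j (q^2)
            * q powi (2 * (int k - int j)^2 - (int k - int j) + (int n - 1) * int j - 1)
            * qpoch (q powi (int n + 2 - 4 * int k + 2 * int j)) (q^2) (2*k - 2*j)
            / qpoch q q (2*k - 2*j))
       = q powi (2 * (int k)^2 - int k - 1) *
         (\<Sum>r=0..2*k. qbinom (n - 2*i) r q
            * q powi ((2 * int k - int r) * (int n - 2 * int i - int r))
            * (\<Prod>j\<in>{int i + int r + 1 - 2 * int k .. int i}. 1 - q powi (2 * j))
            / (\<Prod>j=1..2*k - r. 1 - q ^ j))"
proof -
  obtain m where n: "n = 2 * m + 2 * i"
    using \<open>even n\<close> \<open>i \<le> n div 2\<close> by (auto elim!: evenE intro: that[of "n div 2 - i"])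
  show ?thesis
    unfolding lhs_eq_lhs_sum[OF n assms(6,7)] rhs_eq_rhs_sum[OF n assms(7)]
    using lhs_sum_eq_rhs_sum[OF assms(6)] by simp
qed

end
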